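(* Fix $n \ge n_0$ where $n_0$ is a sufficiently large universal constant. For $G=(L\cup R,E)$ drawn uniformly from $\mathcal{G}_{2n}$, with probability at least $1 - \frac{1}{n^2}$, we have $|E(B, A)| \ge \frac{1}{4} |B| |A|$ for every $A \subseteq L$ and $B \subseteq R$ satisfying $|A|, |B| \ge \frac{n}{8}$.
   Context: Fix disjoint vertex sets $L,R$ with $|L|=|R|=n$ and a fixed perfect matching $M$ of directed edges from $L$ to $R$. $\mathcal{G}_{2n}$ is the set of all unweighted directed graphs on vertex set $L\cup R$ whose set of edges from $L$ to $R$ is exactly $M$, whose edges from $R$ to $L$ form an arbitrary subset of $R\times L$, and which have no other edges. $E(B,A)$ is the set of edges from $B$ to $A$. *)

theory Defs
  imports "HOL-Probability.Probability"
begin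

definition perfect_matching :: "'a set \<Rightarrow> 'a set \<Rightarrow> ('a \<times> 'a) set \<Rightarrow> bool" where
  "perfect_matching L R M \<longleftrightarrow> M \<subseteq> L \<times> R \<and>
     (\<forall>l\<in>L. \<exists>!r. (l, r) \<in> M) \<and> (\<forall>r\<in>R. \<exists>!l. (l, r) \<in> M)"

definition graph_family :: "'a set \<Rightarrow> 'a set \<Rightarrow> ('a \<times> 'a) set \<Rightarrow> ('a \<times> 'a) set set" where
  "graph_family L R M = {E. E \<subseteq> (L \<times> R) \<union> (R \<times> L) \<and> E \<inter> (L \<times> R) = M}"

definition edges_between :: "('a \<times> 'a) set \<Rightarrow> 'a set \<Rightarrow> 'a set \<Rightarrow> ('a \<times> 'a) set" where
  "edges_between E B A = {(u, v) \<in> E. u \<in> B \<and> v \<in> A}"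

end

theory Submission imports Defs "HOL-Real_Asymp.Real_Asymp" begin

text \<open>A graph of the family is the matching M together with an arbitrary set of R-to-L edges,
  so a uniformly random graph is M plus a uniformly random subset of R \<times> L, in which each
  edge is present independently with probability 1/2. For fixed A and B the number of edges
  from B to A is therefore binomial with parameters |B||A| and 1/2, and Hoeffding's inequality
  bounds the probability that it is at most |B||A|/4 by exp(-|B||A|/8) \<le> exp(-n^2/512).
  A union bound over the at most 4^n pairs (A, B) leaves a failure probability of at most
  4^n exp(-n^2/512), which is below 1/n^2 for large n.\<close>

lemma prob_Pow_card_Int_le:
  fixes \<epsilon> :: real
  assumes "finite S" "C \<subseteq> S" "C \<noteq> {}" "\<epsilon> \<ge> 0"
  shows "measure_pmf.prob (pmf_of_set (Pow S)) {T. real (card (T \<inter> C)) \<le> real (card C) / 2 - \<epsilon>}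
           \<le> exp (-2 * \<epsilon>\<^sup>2 / real (card C))"
proof -
  have fin_C: "finite C" using assms(1,2) finite_subset by blast
  let ?k = "card C"
  let ?coins = "\<lambda>X. Pi_pmf X False (\<lambda>_. bernoulli_pmf (1/2))"
  have "measure_pmf.prob (pmf_of_set (Pow S)) {T. real (card (T \<inter> C)) \<le> real ?k / 2 - \<epsilon>}
      = measure_pmf.prob (?coins S) {b. real (card ({x\<in>S. b x} \<inter> C)) \<le> real ?k / 2 - \<epsilon>}"
    by (subst pmf_of_set_Pow_conv_bernoulli[OF assms(1), symmetric]) (simp add: vimage_def)
  also have "\<dots> = measure_pmf.prob (?coins C) {b. real (card {x\<in>C. b x}) \<le> real ?k / 2 - \<epsilon>}"
  proof -
    have "{x\<in>S. b x} \<inter> C = {x\<in>C. if x \<in> C then b x else False}" for b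
      using assms(2) by auto
    then show ?thesis
      by (subst Pi_pmf_subset[OF assms(1,2)]) (simp add: vimage_def)
  qed
  also have "\<dots> = measure_pmf.prob (binomial_pmf ?k (1/2)) {x. real x \<le> real ?k * (1/2) - \<epsilon>}"
    by (subst binomial_pmf_altdef'[OF fin_C refl, of "1/2" False]) (auto simp: vimage_def)
  also have "\<dots> \<le> exp (-2 * \<epsilon>\<^sup>2 / real ?k)"
    using assms(3,4) fin_C
    by (intro binomial_distribution.prob_le) (auto simp: binomial_distribution_def card_gt_0_iff)
  finally show ?thesis .
qed

lemma graph_family_eq_image_Pow:
  assumes "M \<subseteq> L \<times> R" "L \<inter> R = {}"
  shows "graph_family L R M = (\<union>) M ` Pow (R \<times> L)"
proof
  show "graph_family L R M \<subseteq> (\<union>) M ` Pow (R \<times> L)"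
  proof
    fix E assume "E \<in> graph_family L R M"
    then have "E = M \<union> (E \<inter> (R \<times> L))"
      unfolding graph_family_def by blast
    then show "E \<in> (\<union>) M ` Pow (R \<times> L)" by blast
  qed
  show "(\<union>) M ` Pow (R \<times> L) \<subseteq> graph_family L R M"
    using assms unfolding graph_family_def by blast
qed

lemma pmf_of_set_graph_family:
  assumes "finite L" "finite R" "M \<subseteq> L \<times> R" "L \<inter> R = {}"
  shows "pmf_of_set (graph_family L R M) = map_pmf ((\<union>) M) (pmf_of_set (Pow (R \<times> L)))"
proof -
  have "inj_on ((\<union>) M) (Pow (R \<times> L))"
    using assms(3,4) by (intro inj_onI) blast
  then show ?thesis
    using assms by (simp add: map_pmf_of_set_inj graph_family_eq_image_Pow Pow_not_empty)
qed

lemma prob_graph_family_few_edges_between: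
  assumes "finite L" "finite R" "M \<subseteq> L \<times> R" "L \<inter> R = {}"
    and "A \<subseteq> L" "B \<subseteq> R" "A \<noteq> {}" "B \<noteq> {}"
  shows "measure_pmf.prob (pmf_of_set (graph_family L R M))
           {E. real (card (edges_between E B A)) \<le> 1/4 * real (card B) * real (card A)}
         \<le> exp (- real (card B) * real (card A) / 8)"
proof -
  let ?k = "real (card (B \<times> A))"
  have k: "?k = real (card B) * real (card A)"
    by (simp add: card_cartesian_product)
  have "edges_between (M \<union> T) B A = T \<inter> (B \<times> A)" for T
    using assms(3-6) unfolding edges_between_def by blast
  then have "measure_pmf.prob (pmf_of_set (graph_family L R M))
           {E. real (card (edges_between E B A)) \<le> 1/4 * real (card B) * real (card A)}
      = measure_pmf.prob (pmf_of_set (Pow (R \<times> L))) {T. real (card (T \<inter> (B \<times> A))) \<le> ?k / 2 - ?k / 4}"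
    using assms(1-4) by (simp add: pmf_of_set_graph_family k vimage_def mult.commute)
  also have "\<dots> \<le> exp (-2 * (?k / 4)\<^sup>2 / ?k)"
    using assms(1,2,5-8) by (intro prob_Pow_card_Int_le) auto
  also have "-2 * (?k / 4)\<^sup>2 / ?k = - real (card B) * real (card A) / 8"
    using assms(1,2,5-8) by (simp add: k power2_eq_square finite_subset)
  finally show ?thesis .
qed

lemma card_pairs_of_subsets_le:
  assumes "finite L" "finite R"
  shows "card {(A, B). A \<subseteq> L \<and> B \<subseteq> R \<and> P A B} \<le> 2 ^ card L * 2 ^ card R"
proof -
  have "card {(A, B). A \<subseteq> L \<and> B \<subseteq> R \<and> P A B} \<le> card (Pow L \<times> Pow R)"
    using assms by (intro card_mono) auto
  then show ?thesis
    using assms by (simp add: card_cartesian_product card_Pow)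
qed

lemma measure_pmf_prob_UN_le_card_mult:
  assumes "finite I" "\<And>i. i \<in> I \<Longrightarrow> measure_pmf.prob p (X i) \<le> c"
  shows "measure_pmf.prob p (\<Union>i\<in>I. X i) \<le> real (card I) * c"
proof -
  have "measure_pmf.prob p (\<Union>i\<in>I. X i) \<le> (\<Sum>i\<in>I. measure_pmf.prob p (X i))"
    using assms(1) by (intro measure_pmf.finite_measure_subadditive_finite) auto
  also have "\<dots> \<le> real (card I) * c"
    using assms(2) by (intro sum_bounded_above) auto
  finally show ?thesis .
qed

lemma prob_graph_family_large_cuts_dense:
  fixes m :: real
  assumes fin: "finite L" "finite R" and M: "M \<subseteq> L \<times> R" and disj: "L \<inter> R = {}" and "m > 0"
  shows "measure_pmf.prob (pmf_of_set (graph_family L R M))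
           {E. \<forall>A B. A \<subseteq> L \<and> B \<subseteq> R \<and> real (card A) \<ge> m \<and> real (card B) \<ge> m \<longrightarrow>
                 real (card (edges_between E B A)) \<ge> 1/4 * real (card B) * real (card A)}
         \<ge> 1 - 2 ^ card L * 2 ^ card R * exp (- m\<^sup>2 / 8)"
    (is "_ \<le> measure_pmf.prob ?p ?dense")
proof -
  define P where "P = {(A, B). A \<subseteq> L \<and> B \<subseteq> R \<and> real (card A) \<ge> m \<and> real (card B) \<ge> m}"
  define sparse :: "'a set \<times> 'a set \<Rightarrow> ('a \<times> 'a) set set" where "sparse = (\<lambda>(A, B).
    {E. real (card (edges_between E B A)) \<le> 1/4 * real (card B) * real (card A)})"
  have "P \<subseteq> Pow L \<times> Pow R"
    unfolding P_def by auto
  then have fin_P: "finite P"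
    by (rule finite_subset) (use fin in simp)
  have card_P: "real (card P) \<le> 2 ^ card L * 2 ^ card R"
    using of_nat_mono[where 'a=real, OF card_pairs_of_subsets_le[OF fin]] unfolding P_def by simp
  have sparse_bound: "measure_pmf.prob ?p (sparse AB) \<le> exp (- m\<^sup>2 / 8)" if "AB \<in> P" for AB
  proof -
    obtain A B where AB: "AB = (A, B)" "A \<subseteq> L" "B \<subseteq> R" "m \<le> card A" "m \<le> card B"
      using \<open>AB \<in> P\<close> unfolding P_def by auto
    have "A \<noteq> {}" "B \<noteq> {}" using AB(4,5) \<open>m > 0\<close> by auto
    then have "measure_pmf.prob ?p (sparse AB) \<le> exp (- real (card B) * real (card A) / 8)"
      using prob_graph_family_few_edges_between[OF fin M disj AB(2,3)] unfolding sparse_def AB(1) by simp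
    also have "\<dots> \<le> exp (- m\<^sup>2 / 8)"
    proof -
      have "m * m \<le> real (card B) * real (card A)"
        using AB(4,5) \<open>m > 0\<close> by (intro mult_mono) auto
      then show ?thesis by (simp add: power2_eq_square)
    qed
    finally show ?thesis .
  qed
  have "measure_pmf.prob ?p (\<Union>AB\<in>P. sparse AB) \<le> real (card P) * exp (- m\<^sup>2 / 8)"
    using fin_P sparse_bound by (rule measure_pmf_prob_UN_le_card_mult)
  also have "\<dots> \<le> 2 ^ card L * 2 ^ card R * exp (- m\<^sup>2 / 8)"
    using card_P by (intro mult_right_mono) simp_all
  finally have "1 - 2 ^ card L * 2 ^ card R * exp (- m\<^sup>2 / 8) \<le> measure_pmf.prob ?p (- (\<Union>AB\<in>P. sparse AB))"
    using measure_pmf.prob_compl[of "\<Union>AB\<in>P. sparse AB" ?p] by (simp add: Compl_eq_Diff_UNIV)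
  also have "\<dots> \<le> measure_pmf.prob ?p ?dense"
  proof (rule measure_pmf.finite_measure_mono)
    show "- (\<Union>AB\<in>P. sparse AB) \<subseteq> ?dense"
    proof (intro subsetI CollectI allI impI)
      fix E A B
      assume "E \<in> - (\<Union>AB\<in>P. sparse AB)" and "A \<subseteq> L \<and> B \<subseteq> R \<and> real (card A) \<ge> m \<and> real (card B) \<ge> m"
      then have "E \<notin> sparse (A, B)"
        unfolding P_def by blast
      then show "real (card (edges_between E B A)) \<ge> 1/4 * real (card B) * real (card A)"
        unfolding sparse_def by simp
    qed
  qed simp
  finally show ?thesis .
qed

lemma eventually_four_pow_mul_exp_le_inverse_square:
  "\<forall>\<^sub>F n in sequentially. 4 ^ n * exp (- (real n)\<^sup>2 / 512) \<le> 1 / (real n)\<^sup>2"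
  by real_asymp

theorem lemma9:
  "\<exists>n0::nat. \<forall>n \<ge> n0. \<forall>(L::'a set) R M.
     finite L \<and> finite R \<and> L \<inter> R = {} \<and> card L = n \<and> card R = n \<and> perfect_matching L R M \<longrightarrow>
     measure_pmf.prob (pmf_of_set (graph_family L R M))
       {E. \<forall>A B. A \<subseteq> L \<and> B \<subseteq> R \<and> real (card A) \<ge> real n / 8 \<and> real (card B) \<ge> real n / 8 \<longrightarrow>
              real (card (edges_between E B A)) \<ge> 1/4 * real (card B) * real (card A)}
     \<ge> 1 - 1 / (real n)^2"
proof -
  obtain n0 where n0: "\<And>n. n \<ge> n0 \<Longrightarrow> 4 ^ n * exp (- (real n)\<^sup>2 / 512) \<le> 1 / (real n)\<^sup>2"
    using eventually_four_pow_mul_exp_le_inverse_square unfolding eventually_sequentially by blast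
  show ?thesis
  proof (intro exI[of _ "max n0 1"] allI impI, elim conjE)
    fix n :: nat and L R :: "'a set" and M
    assume n: "max n0 1 \<le> n" and fin: "finite L" "finite R" and disj: "L \<inter> R = {}"
      and card_LR: "card L = n" "card R = n" and "perfect_matching L R M"
    then have M: "M \<subseteq> L \<times> R" unfolding perfect_matching_def by blast
    have "1 - 1 / (real n)\<^sup>2 \<le> 1 - 2 ^ card L * 2 ^ card R * exp (- (real n / 8)\<^sup>2 / 8)"
      using n0[of n] n unfolding card_LR by (simp add: power_divide flip: power_mult_distrib)
    also have "\<dots> \<le> measure_pmf.prob (pmf_of_set (graph_family L R M))
       {E. \<forall>A B. A \<subseteq> L \<and> B \<subseteq> R \<and> real (card A) \<ge> real n / 8 \<and> real (card B) \<ge> real n / 8 \<longrightarrow>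
              real (card (edges_between E B A)) \<ge> 1/4 * real (card B) * real (card A)}"
      using n by (intro prob_graph_family_large_cuts_dense[OF fin M disj]) simp
    finally show "\<dots> \<ge> 1 - 1 / (real n)\<^sup>2" .
  qed
qed

end
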